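(* Let $n,m\ge 1$ and identify $n$-bit strings with elements of the finite field $\mathbb{F}_{2^n}$, with addition $\oplus$ (bitwise XOR) and field multiplication $*$; for a bit $d$ and $b\in\mathbb{F}_{2^n}$ let $d\cdot b$ be $0$ if $d=0$ and $b$ if $d=1$. Let $B_1,\dots,B_m$ be independent uniformly random elements of $\mathbb{F}_{2^n}$ (honest Bob's challenges), and let $R_A$ be a random variable on a finite set, independent of $(B_1,\dots,B_m)$ (Alice's preshared randomness). A classical cheating strategy of Alice is a collection of deterministic functions with values in $\mathbb{F}_{2^n}$ giving her messages $Y_1=f_1(R_A,B_1)$; for $2\le k\le m$, $Y_k^{(d)}=f_k(R_A,B_1,\dots,B_{k-2},B_k,d)$; and $Y_{m+1}^{(d)}=f_{m+1}(R_A,B_1,\dots,B_{m-1},d)$, where $d\in\{0,1\}$ is the bit she attempts to unveil. Let $H_d$ be the event $$Y^{(d)}_{m+1}=\bigoplus_{j=1}^{m}\Big(\prod_{i=j+1}^{m}B_i\Big)*Y^{(d)}_j\ \oplus\ d\cdot\prod_{i=1}^{m}B_i,$$ where $Y^{(d)}_1:=Y_1$, products are taken with $*$ and the empty product equals $1$, and let $p_d=\Pr[H_d]$. Define $c_1=2^{-n}$ and $c_m=2^{-(n+1)}+\sqrt{c_{m-1}}$ for $m\ge2$. Then for every such strategy, $p_0+p_1\le 1+c_m$; i.e. the $(m+1)$-round protocol is $\varepsilon$-binding against classical adversaries with $\varepsilon=c_m$.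
   Context: The multi-round protocol: Alice's agents share independent uniform secrets $a_1,\dots,a_m\in\mathbb{F}_{2^n}$ and Bob's agents independent uniform $b_1,\dots,b_m$. Rounds alternate between two distant locations and consecutive rounds are space-like separated. Round 1 (commit): Bob sends $x_1=b_1$, Alice returns $y_1=d\cdot x_1\oplus a_1$. Rounds $2\le k\le m$ (sustain): Bob sends $x_k=b_k$, Alice returns $y_k=(x_k*a_{k-1})\oplus a_k$. Round $m+1$ (open): Alice sends $d$ and $y_{m+1}=a_m$. Bob accepts iff $y_{m+1}=y_m\oplus b_m*y_{m-1}\oplus b_m*b_{m-1}*y_{m-2}\oplus\dots\oplus b_m*\cdots*b_2*y_1\oplus d\cdot b_m*\cdots*b_1$. The causal constraints imply that Alice's message in round $k$ cannot depend on Bob's message in round $k-1$, and her commit-phase message cannot depend on $d$; this is what the dependencies of the functions $f_k$ in the claim encode. A protocol is $\varepsilon$-binding if $p_0+p_1\le1+\varepsilon$ for all cheating strategies. *)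

theory Defs
  imports "HOL-Probability.Probability"
begin

text \<open>Field elements of GF(2^n) are modelled by an arbitrary finite field 'a with
  CARD('a) = 2^n (unique up to isomorphism); XOR is field addition.
  Bob's challenges B_1..B_m are functions b :: nat => 'a restricted to {1..m}.\<close>

definition challenge_space :: "nat \<Rightarrow> (nat \<Rightarrow> 'a::finite) set" where
  "challenge_space m = PiE {1..m} (\<lambda>_. UNIV)"

text \<open>Restriction of the challenge vector to the coordinates in S (others set to 0);
  used to encode which challenges a message may depend on.\<close>
definition restr :: "nat set \<Rightarrow> (nat \<Rightarrow> 'a::zero) \<Rightarrow> nat \<Rightarrow> 'a" where
  "restr S b = (\<lambda>i. if i \<in> S then b i else 0)"

definition bitmul :: "bool \<Rightarrow> 'a::zero \<Rightarrow> 'a" where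
  "bitmul d x = (if d then x else 0)"

definition msg :: "('r \<Rightarrow> 'a \<Rightarrow> 'a) \<Rightarrow> (nat \<Rightarrow> 'r \<Rightarrow> (nat \<Rightarrow> 'a) \<Rightarrow> bool \<Rightarrow> 'a)
    \<Rightarrow> 'r \<Rightarrow> (nat \<Rightarrow> 'a::field) \<Rightarrow> bool \<Rightarrow> nat \<Rightarrow> 'a" where
  "msg f1 f r b d k =
     (if k = 1 then f1 r (b 1) else f k r (restr ({1..k-2} \<union> {k}) b) d)"

definition accepts :: "nat \<Rightarrow> ('r \<Rightarrow> 'a \<Rightarrow> 'a) \<Rightarrow> (nat \<Rightarrow> 'r \<Rightarrow> (nat \<Rightarrow> 'a) \<Rightarrow> bool \<Rightarrow> 'a)
    \<Rightarrow> ('r \<Rightarrow> (nat \<Rightarrow> 'a) \<Rightarrow> bool \<Rightarrow> 'a) \<Rightarrow> bool \<Rightarrow> 'r \<Rightarrow> (nat \<Rightarrow> 'a::field) \<Rightarrow> bool" where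
  "accepts m f1 f g d r b \<longleftrightarrow>
     g r (restr {1..m-1} b) d =
       (\<Sum>j\<in>{1..m}. (\<Prod>i\<in>{j+1..m}. b i) * msg f1 f r b d j)
       + bitmul d (\<Prod>i\<in>{1..m}. b i)"

definition success_prob :: "nat \<Rightarrow> 'r pmf \<Rightarrow> ('r \<Rightarrow> 'a::{field,finite} \<Rightarrow> 'a) \<Rightarrow> (nat \<Rightarrow> 'r \<Rightarrow> (nat \<Rightarrow> 'a) \<Rightarrow> bool \<Rightarrow> 'a)
    \<Rightarrow> ('r \<Rightarrow> (nat \<Rightarrow> 'a) \<Rightarrow> bool \<Rightarrow> 'a) \<Rightarrow> bool \<Rightarrow> real" where
  "success_prob m R f1 f g d =
     measure_pmf.prob (pair_pmf R (pmf_of_set (challenge_space m)))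
       {(r, b). accepts m f1 f g d r b}"

fun c_bound :: "nat \<Rightarrow> nat \<Rightarrow> real" where
  "c_bound n 0 = 0"
| "c_bound n (Suc 0) = 2 powr (- real n)"
| "c_bound n (Suc (Suc k)) = 2 powr (- (real n + 1)) + sqrt (c_bound n (Suc k))"

end

theory Submission
  imports Defs
begin

text \<open>
  Since p0 + p1 = Pr[H0 \<union> H1] + Pr[H0 \<inter> H1], it suffices to show that for every value of
  Alice's randomness at most c_m N^m of the N^m challenge vectors make Bob accept both
  openings. For m = 1 the two openings determine b_1. For m > 1 fix b_1, ..., b_(m-2):
  Bob's check for d reads G_d(b_(m-1)) = Y_d(b_m) + b_m S_d(b_(m-1)), where S_d is the value
  demanded by the check of the (m-1)-round protocol. Two values of b_(m-1) with different
  slope pairs (S_0, S_1) share at most one accepted b_m, so Cauchy-Schwarz bounds the number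
  of accepted pairs (b_(m-1), b_m) by N/2 + N sqrt(N M), where M is the largest multiplicity
  of a slope pair. An (m-1)-round strategy that opens to the most frequent slope pair realises
  these multiplicities, so by induction their sum is at most c_(m-1) N^(m-1); a second
  application of Cauchy-Schwarz gives c_m.
\<close>

lemma quadratic_bound_sqrt:
  fixes D N M :: real
  assumes "D\<^sup>2 \<le> N * D + N\<^sup>2 * (N - 1) * M" and "1 \<le> M" and "0 \<le> N"
  shows "D \<le> N / 2 + N * sqrt (N * M)"
proof -
  have "(D - N / 2)\<^sup>2 \<le> N\<^sup>2 * (N - 1) * M + N\<^sup>2 / 4"
    using assms(1) by (simp add: power2_eq_square algebra_simps)
  also have "\<dots> \<le> N\<^sup>2 * (N * M)"
  proof -
    have "N\<^sup>2 / 4 \<le> N\<^sup>2 * M"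
      using mult_left_mono[OF assms(2), of "N\<^sup>2"] zero_le_power2[of N] by linarith
    then show ?thesis by (simp add: algebra_simps)
  qed
  finally have "D - N / 2 \<le> sqrt (N\<^sup>2 * (N * M))"
    by (rule real_le_rsqrt)
  also have "\<dots> = N * sqrt (N * M)"
    using assms(3) by (simp add: real_sqrt_mult)
  finally show ?thesis by simp
qed

lemma sum_sqrt_le:
  fixes a :: "'i \<Rightarrow> real"
  assumes "\<And>i. i \<in> I \<Longrightarrow> 0 \<le> a i"
  shows "(\<Sum>i\<in>I. sqrt (a i)) \<le> sqrt (real (card I) * (\<Sum>i\<in>I. a i))"
proof (rule real_le_rsqrt)
  have "(\<Sum>i\<in>I. sqrt (a i) * 1)\<^sup>2 \<le> (\<Sum>i\<in>I. (sqrt (a i))\<^sup>2) * (\<Sum>i\<in>I. 1\<^sup>2)"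
    by (rule Cauchy_Schwarz_ineq_sum)
  then show "(\<Sum>i\<in>I. sqrt (a i))\<^sup>2 \<le> real (card I) * (\<Sum>i\<in>I. a i)"
    using assms by (simp add: mult.commute)
qed

lemma sum_square_card_eq_sum_card_common:
  fixes E :: "'x \<Rightarrow> 'z \<Rightarrow> bool"
  assumes "finite X" and "finite Z"
  shows "(\<Sum>z\<in>Z. (card {x\<in>X. E x z})\<^sup>2) = (\<Sum>x\<in>X. \<Sum>x'\<in>X. card {z\<in>Z. E x z \<and> E x' z})"
proof -
  have card: "card {y\<in>Y. P y} = (\<Sum>y\<in>Y. of_bool (P y))" if "finite Y" for Y and P :: "'y \<Rightarrow> bool"
    using that by (simp add: Collect_conj_eq Int_commute)
  have "(\<Sum>z\<in>Z. (card {x\<in>X. E x z})\<^sup>2)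
      = (\<Sum>z\<in>Z. \<Sum>x\<in>X. \<Sum>x'\<in>X. of_bool (E x z \<and> E x' z))"
    unfolding card[OF assms(1)] power2_eq_square sum_product by (simp add: of_bool_conj)
  also have "\<dots> = (\<Sum>x\<in>X. \<Sum>x'\<in>X. \<Sum>z\<in>Z. of_bool (E x z \<and> E x' z))"
    by (subst sum.swap) (simp add: sum.swap[where B = Z])
  finally show ?thesis
    unfolding card[OF assms(2)] .
qed

lemma sum_card_common_le:
  fixes E :: "'a::finite \<Rightarrow> 'a \<Rightarrow> bool" and cls :: "'a \<Rightarrow> 'k"
  assumes common: "\<And>x'. cls x' \<noteq> cls x \<Longrightarrow> card {z. E x z \<and> E x' z} \<le> 1"
    and fiber: "card {x'. cls x' = cls x} \<le> M"
  shows "(\<Sum>x'\<in>UNIV. real (card {z. E x z \<and> E x' z}))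
           \<le> real (card {z. E x z}) + (real CARD('a) - 1) * real M"
proof -
  define N where "N = real CARD('a)"
  define h where "h x' = 1 + (N - 1) * of_bool (cls x' = cls x)" for x'
  have pair: "real (card {z. E x z \<and> E x' z}) \<le> h x'" for x'
  proof (cases "cls x' = cls x")
    case True
    have "card {z. E x z \<and> E x' z} \<le> CARD('a)"
      by (rule card_mono) auto
    then show ?thesis using True unfolding h_def N_def by simp
  next
    case False
    then show ?thesis using common[of x'] unfolding h_def by simp
  qed
  have total: "(\<Sum>x'\<in>UNIV. h x') = N + (N - 1) * real (card {x'. cls x' = cls x})"
    unfolding h_def sum.distrib sum_distrib_left[symmetric] N_def by simp
  have "(\<Sum>x'\<in>UNIV - {x}. real (card {z. E x z \<and> E x' z})) \<le> (\<Sum>x'\<in>UNIV - {x}. h x')"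
    by (intro sum_mono pair)
  also have "\<dots> = (N - 1) * real (card {x'. cls x' = cls x})"
    using total by (simp add: sum_diff1 h_def)
  also have "\<dots> \<le> (N - 1) * real M"
    using fiber by (intro mult_left_mono) (auto simp: N_def Suc_le_eq)
  finally have rest: "(\<Sum>x'\<in>UNIV - {x}. real (card {z. E x z \<and> E x' z})) \<le> (N - 1) * real M" .
  have "(\<Sum>x'\<in>UNIV. real (card {z. E x z \<and> E x' z}))
      = real (card {z. E x z}) + (\<Sum>x'\<in>UNIV - {x}. real (card {z. E x z \<and> E x' z}))"
    by (subst sum.remove[of _ x]) auto
  with rest show ?thesis unfolding N_def by linarith
qed

lemma card_incidences_le:
  fixes E :: "'a::finite \<Rightarrow> 'a \<Rightarrow> bool" and cls :: "'a \<Rightarrow> 'k"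
  assumes common: "\<And>x x'. cls x' \<noteq> cls x \<Longrightarrow> card {z. E x z \<and> E x' z} \<le> 1"
    and fiber: "\<And>x. card {x'. cls x' = cls x} \<le> M" and "1 \<le> M"
  shows "real (card {(x, z). E x z})
           \<le> real CARD('a) / 2 + real CARD('a) * sqrt (real CARD('a) * real M)"
proof -
  define N where "N = real CARD('a)"
  define D where "D = real (card {(x, z). E x z})"
  have D_rows: "D = (\<Sum>x\<in>UNIV. real (card {z. E x z}))"
  proof -
    have "{(x, z). E x z} = (SIGMA x:UNIV. {z. E x z})" by auto
    then show ?thesis unfolding D_def by simp
  qed
  have D_columns: "D = (\<Sum>z\<in>UNIV. real (card {x. E x z}))"
  proof -
    have "(\<Sum>x\<in>UNIV. real (card {z. E x z})) = (\<Sum>x\<in>UNIV. \<Sum>z\<in>UNIV. of_bool (E x z))"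
      by simp
    also have "\<dots> = (\<Sum>z\<in>UNIV. \<Sum>x\<in>UNIV. of_bool (E x z))"
      by (rule sum.swap)
    finally show ?thesis
      unfolding D_rows by simp
  qed
  have "(\<Sum>z\<in>UNIV. (real (card {x. E x z}))\<^sup>2)
      = (\<Sum>x\<in>UNIV. \<Sum>x'\<in>UNIV. real (card {z. E x z \<and> E x' z}))"
    using arg_cong[where f = real, OF sum_square_card_eq_sum_card_common[of UNIV UNIV E]] by simp
  also have "\<dots> \<le> (\<Sum>x\<in>UNIV. real (card {z. E x z}) + (N - 1) * real M)"
    unfolding N_def by (intro sum_mono sum_card_common_le[where cls = cls] common fiber)
  also have "\<dots> = D + N * ((N - 1) * real M)"
    unfolding sum.distrib D_rows N_def by simp
  finally have second_moment: "(\<Sum>z\<in>UNIV. (real (card {x. E x z}))\<^sup>2) \<le> D + N * ((N - 1) * real M)" .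
  have "D\<^sup>2 \<le> N * (\<Sum>z\<in>UNIV. (real (card {x. E x z}))\<^sup>2)"
    using Cauchy_Schwarz_ineq_sum[of "\<lambda>z. real (card {x. E x z})" "\<lambda>_. 1" UNIV]
    unfolding D_columns N_def by (simp add: mult.commute)
  also have "\<dots> \<le> N * (D + N * ((N - 1) * real M))"
    using second_moment by (intro mult_left_mono) (auto simp: N_def)
  finally have "D\<^sup>2 \<le> N * D + N\<^sup>2 * (N - 1) * real M"
    by (simp add: power2_eq_square algebra_simps)
  then show ?thesis
    using quadratic_bound_sqrt[of D N "real M"] \<open>1 \<le> M\<close> unfolding D_def N_def by simp
qed

definition max_fiber_card :: "('x::finite \<Rightarrow> 'v) \<Rightarrow> nat" where
  "max_fiber_card h = Max (range (\<lambda>x. card {x'. h x' = h x}))"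

lemma card_fiber_le_max_fiber_card: "card {x'. h x' = h x} \<le> max_fiber_card h"
  unfolding max_fiber_card_def by simp

lemma max_fiber_card_attained: "\<exists>x. card {x'. h x' = h x} = max_fiber_card h"
proof -
  have "max_fiber_card h \<in> range (\<lambda>x. card {x'. h x' = h x})"
    unfolding max_fiber_card_def by (rule Max_in) simp_all
  then obtain x where "max_fiber_card h = card {x'. h x' = h x}"
    by (rule rangeE)
  then show ?thesis
    by (intro exI[of _ x]) simp
qed

lemma one_le_max_fiber_card: "1 \<le> max_fiber_card h"
proof -
  have "1 \<le> card {x'. h x' = h x}" for x
    by (simp add: Suc_le_eq card_gt_0_iff) blast
  then show ?thesis
    using card_fiber_le_max_fiber_card[of h undefined] by (meson order_trans)
qed

lemma card_common_solutions_le_one: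
  fixes Y :: "'d \<Rightarrow> 'a \<Rightarrow> 'a::field"
  assumes "s \<noteq> s'"
  shows "card {z. (\<forall>d. g d = Y d z + z * s d) \<and> (\<forall>d. g' d = Y d z + z * s' d)} \<le> 1"
proof -
  obtain d where d: "s d \<noteq> s' d"
    using assms by auto
  have "{z. (\<forall>d. g d = Y d z + z * s d) \<and> (\<forall>d. g' d = Y d z + z * s' d)}
      \<subseteq> {(g d - g' d) / (s d - s' d)}"
  proof clarify
    fix z
    assume "\<forall>d. g d = Y d z + z * s d" and "\<forall>d. g' d = Y d z + z * s' d"
    then have "z * (s d - s' d) = g d - g' d"
      by (simp add: right_diff_distrib)
    then show "z = (g d - g' d) / (s d - s' d)"
      using d by (simp add: eq_divide_eq)
  qed
  from card_mono[OF _ this] show ?thesis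
    by simp
qed

lemma prob_pair_uniform_le:
  fixes R :: "'r pmf" and C :: "'b set"
  assumes "finite (set_pmf R)" and "finite C" and "C \<noteq> {}"
    and bound: "\<And>r. real (card {b \<in> C. Q r b}) \<le> c * real (card C)"
  shows "measure_pmf.prob (pair_pmf R (pmf_of_set C)) {(r, b). Q r b} \<le> c"
proof -
  let ?M = "pair_pmf R (pmf_of_set C)"
  have "measure_pmf.prob ?M {(r, b). Q r b} = measure_pmf.prob ?M (SIGMA r:set_pmf R. {b \<in> C. Q r b})"
    using assms(2,3) by (subst measure_Int_set_pmf[symmetric]) (auto intro!: arg_cong[where f = "measure _"])
  also have "\<dots> = (\<Sum>r\<in>set_pmf R. \<Sum>b\<in>{b \<in> C. Q r b}. pmf ?M (r, b))"
    using assms(1,2) by (simp add: measure_measure_pmf_finite sum.Sigma)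
  also have "\<dots> = (\<Sum>r\<in>set_pmf R. \<Sum>b\<in>{b \<in> C. Q r b}. pmf R r / real (card C))"
    using assms(2,3) by (intro sum.cong refl) (simp add: pmf_pair)
  also have "\<dots> = (\<Sum>r\<in>set_pmf R. pmf R r * (real (card {b \<in> C. Q r b}) / real (card C)))"
    by (simp add: mult.commute)
  also have "\<dots> \<le> (\<Sum>r\<in>set_pmf R. pmf R r * c)"
    using assms(2,3) bound by (intro sum_mono mult_left_mono) (auto simp: divide_le_eq card_gt_0_iff)
  also have "\<dots> = c"
    using assms(1) by (simp add: sum_distrib_right[symmetric] sum_pmf_eq_1)
  finally show ?thesis .
qed

lemma finite_challenge_space: "finite (challenge_space m :: (nat \<Rightarrow> 'a::finite) set)"
  unfolding challenge_space_def by (simp add: finite_PiE)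

lemma card_challenge_space: "card (challenge_space m :: (nat \<Rightarrow> 'a::finite) set) = CARD('a) ^ m"
  unfolding challenge_space_def by (simp add: card_PiE)

lemma challenge_space_nonempty: "challenge_space m \<noteq> {}"
  unfolding challenge_space_def by (simp add: PiE_eq_empty_iff)

lemma sum_challenge_space_Suc:
  "(\<Sum>b\<in>(challenge_space (Suc m) :: (nat \<Rightarrow> 'a::finite) set). h b)
     = (\<Sum>b\<in>challenge_space m. \<Sum>z\<in>UNIV. h (b(Suc m := z)))"
proof -
  have space: "challenge_space (Suc m) = (\<lambda>(z, b). b(Suc m := z)) ` (UNIV \<times> challenge_space m)"
    unfolding challenge_space_def by (simp add: atLeastAtMostSuc_conv PiE_insert_eq)
  have inj: "inj_on (\<lambda>(z, b). b(Suc m := z)) (UNIV \<times> (challenge_space m :: (nat \<Rightarrow> 'a) set))"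
    unfolding challenge_space_def using inj_combinator[of "Suc m" "{1..m}" "\<lambda>_. UNIV"] by simp
  have "(\<Sum>b\<in>(challenge_space (Suc m) :: (nat \<Rightarrow> 'a) set). h b)
      = (\<Sum>(z, b)\<in>UNIV \<times> challenge_space m. h (b(Suc m := z)))"
    unfolding space sum.reindex[OF inj] by (simp add: case_prod_beta)
  also have "\<dots> = (\<Sum>z\<in>UNIV. \<Sum>b\<in>challenge_space m. h (b(Suc m := z)))"
    by (rule sum.cartesian_product[symmetric])
  finally show ?thesis
    by (simp add: sum.swap[where A = UNIV])
qed

lemma card_challenge_space_Suc:
  "card {b \<in> (challenge_space (Suc m) :: (nat \<Rightarrow> 'a::finite) set). P b}
     = (\<Sum>b\<in>challenge_space m. card {z. P (b(Suc m := z))})"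
proof -
  have "card {b \<in> (challenge_space (Suc m) :: (nat \<Rightarrow> 'a) set). P b}
      = (\<Sum>b\<in>challenge_space (Suc m). of_bool (P b))"
    by (simp add: finite_challenge_space Collect_conj_eq Int_commute)
  also have "\<dots> = (\<Sum>b\<in>challenge_space m. \<Sum>z\<in>UNIV. of_bool (P (b(Suc m := z))))"
    by (rule sum_challenge_space_Suc)
  finally show ?thesis
    by simp
qed

lemma card_challenge_space_Suc_Suc:
  "card {b \<in> (challenge_space (Suc (Suc m)) :: (nat \<Rightarrow> 'a::finite) set). P b}
     = (\<Sum>b\<in>challenge_space m. card {(x, z). P (b(Suc m := x, Suc (Suc m) := z))})"
proof -
  have "card {(x, z). Q x z} = (\<Sum>x\<in>UNIV. card {z. Q x z})" for Q :: "'a \<Rightarrow> 'a \<Rightarrow> bool"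
  proof -
    have "{(x, z). Q x z} = (SIGMA x:UNIV. {z. Q x z})" by auto
    then show ?thesis by simp
  qed
  then show ?thesis
    unfolding card_challenge_space_Suc[of "Suc m"]
    by (simp add: sum_challenge_space_Suc[where m = m] card_challenge_space_Suc)
qed

definition expected_opening :: "nat \<Rightarrow> ('r \<Rightarrow> 'a \<Rightarrow> 'a) \<Rightarrow> (nat \<Rightarrow> 'r \<Rightarrow> (nat \<Rightarrow> 'a) \<Rightarrow> bool \<Rightarrow> 'a)
    \<Rightarrow> 'r \<Rightarrow> (nat \<Rightarrow> 'a::field) \<Rightarrow> bool \<Rightarrow> 'a" where
  "expected_opening m f1 f r b d =
     (\<Sum>j\<in>{1..m}. (\<Prod>i\<in>{j+1..m}. b i) * msg f1 f r b d j) + bitmul d (\<Prod>i\<in>{1..m}. b i)"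

definition accepts_both :: "nat \<Rightarrow> ('r \<Rightarrow> 'a \<Rightarrow> 'a) \<Rightarrow> (nat \<Rightarrow> 'r \<Rightarrow> (nat \<Rightarrow> 'a) \<Rightarrow> bool \<Rightarrow> 'a)
    \<Rightarrow> ('r \<Rightarrow> (nat \<Rightarrow> 'a) \<Rightarrow> bool \<Rightarrow> 'a) \<Rightarrow> 'r \<Rightarrow> (nat \<Rightarrow> 'a::field) \<Rightarrow> bool" where
  "accepts_both m f1 f g r b \<longleftrightarrow> (\<forall>d. accepts m f1 f g d r b)"

lemma accepts_iff_expected_opening:
  "accepts m f1 f g d r b \<longleftrightarrow> g r (restr {1..m-1} b) d = expected_opening m f1 f r b d"
  unfolding accepts_def expected_opening_def ..

lemma restr_cong: "(\<And>i. i \<in> S \<Longrightarrow> b i = b' i) \<Longrightarrow> restr S b = restr S b'"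
  unfolding restr_def by auto

lemma expected_opening_cong:
  assumes "\<And>i. i \<in> {1..m} \<Longrightarrow> b i = b' i"
  shows "expected_opening m f1 f r b = expected_opening m f1 f r b'"
proof -
  have "msg f1 f r b d j = msg f1 f r b' d j" if "j \<in> {1..m}" for d j
    unfolding msg_def using that assms
    by (auto intro!: arg_cong[where f = "\<lambda>q. f j r q d"] restr_cong)
  moreover have "(\<Prod>i\<in>{j..m}. b i) = (\<Prod>i\<in>{j..m}. b' i)" if "1 \<le> j" for j
    using that assms by (intro prod.cong) auto
  ultimately show ?thesis
    unfolding expected_opening_def fun_eq_iff
    by (intro allI arg_cong2[where f = "(+)"] sum.cong arg_cong2[where f = "(*)"]) auto
qed

lemma expected_opening_Suc:
  assumes "1 \<le> m"
  shows "expected_opening (Suc m) f1 f r (b(Suc m := z)) d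
           = f (Suc m) r ((restr {1..m-1} b)(Suc m := z)) d + z * expected_opening m f1 f r b d"
proof -
  let ?b = "b(Suc m := z)"
  have msg_old: "msg f1 f r ?b d j = msg f1 f r b d j" if "j \<in> {1..m}" for j
    unfolding msg_def using that
    by (auto intro!: arg_cong[where f = "\<lambda>q. f j r q d"] restr_cong)
  have msg_new: "msg f1 f r ?b d (Suc m) = f (Suc m) r ((restr {1..m-1} b)(Suc m := z)) d"
    unfolding msg_def restr_def using assms
    by (auto intro!: arg_cong[where f = "\<lambda>q. f (Suc m) r q d"])
  have prod_Suc: "(\<Prod>i\<in>{j..Suc m}. ?b i) = z * (\<Prod>i\<in>{j..m}. b i)" if "j \<le> Suc m" for j
  proof -
    have "(\<Prod>i\<in>{j..Suc m}. ?b i) = (\<Prod>i\<in>{j..m}. ?b i) * z"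
      using that by (subst prod.cl_ivl_Suc) auto
    also have "(\<Prod>i\<in>{j..m}. ?b i) = (\<Prod>i\<in>{j..m}. b i)"
      by (intro prod.cong) auto
    finally show ?thesis by simp
  qed
  have sum_Suc: "(\<Sum>j\<in>{1..m}. (\<Prod>i\<in>{j+1..Suc m}. ?b i) * msg f1 f r ?b d j)
      = z * (\<Sum>j\<in>{1..m}. (\<Prod>i\<in>{j+1..m}. b i) * msg f1 f r b d j)"
    unfolding sum_distrib_left using msg_old prod_Suc by (intro sum.cong) (auto simp: mult.assoc)
  have bitmul_Suc: "bitmul d (\<Prod>i\<in>{1..Suc m}. ?b i) = z * bitmul d (\<Prod>i\<in>{1..m}. b i)"
    unfolding bitmul_def prod_Suc[of 1] by simp
  have "expected_opening (Suc m) f1 f r ?b d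
      = (\<Sum>j\<in>{1..m}. (\<Prod>i\<in>{j+1..Suc m}. ?b i) * msg f1 f r ?b d j)
        + msg f1 f r ?b d (Suc m) + bitmul d (\<Prod>i\<in>{1..Suc m}. ?b i)"
    unfolding expected_opening_def by (subst sum.cl_ivl_Suc) simp
  also have "\<dots> = z * (\<Sum>j\<in>{1..m}. (\<Prod>i\<in>{j+1..m}. b i) * msg f1 f r b d j)
        + f (Suc m) r ((restr {1..m-1} b)(Suc m := z)) d + z * bitmul d (\<Prod>i\<in>{1..m}. b i)"
    unfolding sum_Suc msg_new bitmul_Suc ..
  finally show ?thesis
    unfolding expected_opening_def by (simp add: algebra_simps)
qed

lemma card_accepts_both_one:
  "card {b \<in> (challenge_space 1 :: (nat \<Rightarrow> 'a::{field,finite}) set). accepts_both 1 f1 f g r b} \<le> 1"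
proof -
  let ?A = "{b \<in> (challenge_space 1 :: (nat \<Rightarrow> 'a) set). accepts_both 1 f1 f g r b}"
  have first: "b 1 = g r (\<lambda>_. 0) True - g r (\<lambda>_. 0) False" if "accepts_both 1 f1 f g r b" for b
  proof -
    have "g r (\<lambda>_. 0) d = f1 r (b 1) + bitmul d (b 1)" for d
      using that unfolding accepts_both_def accepts_iff_expected_opening
      by (simp add: expected_opening_def msg_def restr_def)
    from this[of True] this[of False] show ?thesis
      by (simp add: bitmul_def)
  qed
  have "b = b'" if b: "b \<in> ?A" and b': "b' \<in> ?A" for b b'
  proof (rule PiE_ext)
    show "b \<in> PiE {1..1} (\<lambda>_. UNIV)" and "b' \<in> PiE {1..1} (\<lambda>_. UNIV)"
      using b b' unfolding challenge_space_def by auto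
    show "b i = b' i" if "i \<in> {1..1}" for i
      using that first[of b] first[of b'] b b' by auto
  qed
  moreover have "finite ?A"
    by (rule finite_subset[OF _ finite_challenge_space]) auto
  ultimately have "card ?A \<le> Suc 0"
    by (subst card_le_Suc0_iff_eq) auto
  then show ?thesis
    by simp
qed

text \<open>Opening, after seeing \<open>b\<^sub>1, \<dots>, b\<^sub>k\<close>, to the most frequent value of the check.\<close>

lemma exists_opening_realising_max_fibers:
  fixes f1 :: "'r \<Rightarrow> 'a::{field,finite} \<Rightarrow> 'a"
  shows "\<exists>g. (\<Sum>p\<in>challenge_space k. max_fiber_card (\<lambda>x. expected_opening (Suc k) f1 f r (p(Suc k := x))))
            = card {b \<in> challenge_space (Suc k). accepts_both (Suc k) f1 f g r b}"
proof -
  define S where "S q = (\<lambda>x. expected_opening (Suc k) f1 f r (q(Suc k := x)))" for q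
  have S_restr: "S (restr {1..k} p) = S p" for p
    unfolding S_def by (intro ext expected_opening_cong) (auto simp: restr_def)
  define best where "best q = (SOME x. card {x'. S q x' = S q x} = max_fiber_card (S q))" for q
  have best: "card {x'. S q x' = S q (best q)} = max_fiber_card (S q)" for q
    unfolding best_def using max_fiber_card_attained by (rule someI_ex)
  define g where "g r' q = S q (best q)" for r' :: 'r and q
  have accepts: "accepts_both (Suc k) f1 f g r (p(Suc k := x)) \<longleftrightarrow> S p x = S p (best (restr {1..k} p))"
    for p x
  proof -
    have prefix: "restr {1..Suc k - 1} (p(Suc k := x)) = restr {1..k} p"
      by (auto simp: restr_def)
    show ?thesis
      unfolding accepts_both_def accepts_iff_expected_opening prefix g_def S_restr
      by (auto simp: S_def fun_eq_iff)
  qed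
  have "card {x. accepts_both (Suc k) f1 f g r (p(Suc k := x))} = max_fiber_card (S p)" for p
    unfolding accepts using best[of "restr {1..k} p"] unfolding S_restr .
  then show ?thesis
    unfolding card_challenge_space_Suc S_def by (intro exI[of _ g] sum.cong refl) simp
qed

lemma card_accepts_both_prefix_le:
  fixes f1 :: "'r \<Rightarrow> 'a::{field,finite} \<Rightarrow> 'a"
  defines "N \<equiv> real CARD('a)"
  shows "real (card {(x, z). accepts_both (Suc (Suc k)) f1 f g r (p(Suc k := x, Suc (Suc k) := z))})
           \<le> N / 2 + N * sqrt (N * real (max_fiber_card (\<lambda>x. expected_opening (Suc k) f1 f r (p(Suc k := x)))))"
proof -
  define S where "S x = expected_opening (Suc k) f1 f r (p(Suc k := x))" for x
  define G where "G x = g r (restr {1..Suc k} (p(Suc k := x)))" for x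
  define Y where "Y d z = f (Suc (Suc k)) r ((restr {1..k} p)(Suc (Suc k) := z)) d" for d z
  have accepts: "accepts_both (Suc (Suc k)) f1 f g r (p(Suc k := x, Suc (Suc k) := z))
      \<longleftrightarrow> (\<forall>d. G x d = Y d z + z * S x d)" for x z
  proof -
    have "restr {1..Suc (Suc k) - 1} (p(Suc k := x, Suc (Suc k) := z)) = restr {1..Suc k} (p(Suc k := x))"
      by (auto simp: restr_def)
    moreover have "restr {1..Suc k - 1} (p(Suc k := x)) = restr {1..k} p"
      by (auto simp: restr_def)
    ultimately show ?thesis
      unfolding accepts_both_def accepts_iff_expected_opening
      by (simp add: expected_opening_Suc G_def Y_def S_def)
  qed
  have "real (card {(x, z). \<forall>d. G x d = Y d z + z * S x d})
      \<le> N / 2 + N * sqrt (N * real (max_fiber_card S))"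
    unfolding N_def
  proof (rule card_incidences_le[where cls = S])
    show "card {z. (\<forall>d. G x d = Y d z + z * S x d) \<and> (\<forall>d. G x' d = Y d z + z * S x' d)} \<le> 1"
      if "S x' \<noteq> S x" for x x'
      using that by (intro card_common_solutions_le_one) simp
  qed (rule card_fiber_le_max_fiber_card, rule one_le_max_fiber_card)
  then show ?thesis
    unfolding accepts S_def .
qed

lemma card_accepts_both_Suc_Suc_le:
  fixes f1 :: "'r \<Rightarrow> 'a::{field,finite} \<Rightarrow> 'a" and c :: real
  defines "N \<equiv> real CARD('a)"
  assumes IH: "\<And>g. real (card {b \<in> challenge_space (Suc k). accepts_both (Suc k) f1 f g r b})
                       \<le> c * N ^ Suc k"
    and "0 \<le> c"
  shows "real (card {b \<in> challenge_space (Suc (Suc k)). accepts_both (Suc (Suc k)) f1 f g r b})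
           \<le> (1 / (2 * N) + sqrt c) * N ^ Suc (Suc k)"
proof -
  define M where "M p = real (max_fiber_card (\<lambda>x. expected_opening (Suc k) f1 f r (p(Suc k := x))))"
    for p :: "nat \<Rightarrow> 'a"
  have N_pos: "0 < N"
    unfolding N_def by simp
  have card_space: "real (card (challenge_space k :: (nat \<Rightarrow> 'a) set)) = N ^ k"
    unfolding N_def card_challenge_space by simp
  have sum_M: "(\<Sum>p\<in>challenge_space k. M p) \<le> c * N ^ Suc k"
  proof -
    obtain g' where realised: "(\<Sum>p\<in>challenge_space k. max_fiber_card
          (\<lambda>x. expected_opening (Suc k) f1 f r (p(Suc k := x))))
        = card {b \<in> challenge_space (Suc k). accepts_both (Suc k) f1 f g' r b}"
      using exists_opening_realising_max_fibers[of k f1 f r] by blast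
    show ?thesis
      using arg_cong[where f = real, OF realised] IH[of g'] unfolding M_def by simp
  qed
  have "(\<Sum>p\<in>challenge_space k. sqrt (N * M p))
      \<le> sqrt (N ^ k * (\<Sum>p\<in>challenge_space k. N * M p))"
    using sum_sqrt_le[of "challenge_space k" "\<lambda>p. N * M p"] N_pos unfolding card_space M_def by simp
  also have "\<dots> \<le> sqrt (N ^ k * (N * (c * N ^ Suc k)))"
    using sum_M N_pos by (simp add: sum_distrib_left[symmetric])
  also have "\<dots> = sqrt c * N ^ Suc k"
  proof -
    have "N ^ k * (N * (c * N ^ Suc k)) = c * (N ^ Suc k)\<^sup>2"
      by (simp add: power2_eq_square algebra_simps)
    then have "sqrt (N ^ k * (N * (c * N ^ Suc k))) = sqrt c * sqrt ((N ^ Suc k)\<^sup>2)"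
      by (simp only: real_sqrt_mult)
    then show ?thesis
      using N_pos by simp
  qed
  finally have sum_sqrt: "(\<Sum>p\<in>challenge_space k. sqrt (N * M p)) \<le> sqrt c * N ^ Suc k" .
  have "real (card {b \<in> challenge_space (Suc (Suc k)). accepts_both (Suc (Suc k)) f1 f g r b})
      = (\<Sum>p\<in>challenge_space k.
           real (card {(x, z). accepts_both (Suc (Suc k)) f1 f g r (p(Suc k := x, Suc (Suc k) := z))}))"
    unfolding card_challenge_space_Suc_Suc by simp
  also have "\<dots> \<le> (\<Sum>p\<in>challenge_space k. N / 2 + N * sqrt (N * M p))"
    unfolding M_def N_def by (intro sum_mono card_accepts_both_prefix_le)
  also have "\<dots> = N ^ k * (N / 2) + N * (\<Sum>p\<in>challenge_space k. sqrt (N * M p))"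
    by (simp add: sum.distrib sum_distrib_left card_space)
  also have "\<dots> \<le> N ^ k * (N / 2) + N * (sqrt c * N ^ Suc k)"
    using sum_sqrt N_pos by simp
  also have "\<dots> = (1 / (2 * N) + sqrt c) * N ^ Suc (Suc k)"
    using N_pos by (simp add: field_simps)
  finally show ?thesis .
qed

lemma c_bound_nonneg: "0 \<le> c_bound n m"
  by (induction n m rule: c_bound.induct) auto

lemma card_accepts_both_le_c_bound:
  fixes f1 :: "'r \<Rightarrow> 'a::{field,finite} \<Rightarrow> 'a"
  assumes card: "CARD('a) = 2 ^ n"
  shows "real (card {b \<in> challenge_space (Suc k). accepts_both (Suc k) f1 f g r b})
           \<le> c_bound n (Suc k) * real CARD('a) ^ Suc k"
proof (induction k arbitrary: g)
  case 0
  have "c_bound n (Suc 0) * real CARD('a) = 1"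
    unfolding card c_bound.simps by (simp add: powr_minus powr_realpow inverse_eq_divide)
  then show ?case
    using card_accepts_both_one[of f1 f g r] by simp
next
  case (Suc k)
  have "(2::real) powr (- (real n + 1)) = inverse (2 powr real n * 2 powr 1)"
    by (simp only: powr_minus powr_add)
  also have "\<dots> = 1 / (2 * real CARD('a))"
    unfolding card by (simp add: powr_realpow inverse_eq_divide)
  finally have "2 powr (- (real n + 1)) = 1 / (2 * real CARD('a))" .
  then show ?case
    using card_accepts_both_Suc_Suc_le[OF Suc.IH c_bound_nonneg] by (simp only: c_bound.simps)
qed

theorem mainTheorem2:
  fixes n m :: nat
    and R :: "'r pmf"
    and f1 :: "'r \<Rightarrow> 'a::{field,finite} \<Rightarrow> 'a"
    and f :: "nat \<Rightarrow> 'r \<Rightarrow> (nat \<Rightarrow> 'a) \<Rightarrow> bool \<Rightarrow> 'a"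
    and g :: "'r \<Rightarrow> (nat \<Rightarrow> 'a) \<Rightarrow> bool \<Rightarrow> 'a"
  assumes "n \<ge> 1" and "m \<ge> 1"
    and "CARD('a) = 2 ^ n"
    and "finite (set_pmf R)"
  shows "success_prob m R f1 f g False + success_prob m R f1 f g True \<le> 1 + c_bound n m"
proof -
  obtain k where m: "m = Suc k"
    using \<open>m \<ge> 1\<close> by (cases m) auto
  let ?M = "pair_pmf R (pmf_of_set (challenge_space m))"
  define H where "H d = {(r, b). accepts m f1 f g d r b}" for d
  have "success_prob m R f1 f g False + success_prob m R f1 f g True
      = measure_pmf.prob ?M (H False \<union> H True) + measure_pmf.prob ?M (H False \<inter> H True)"
    unfolding success_prob_def H_def[symmetric]
    using measure_Un3[of "H False" ?M "H True"] by (simp add: measure_pmf.fmeasurable_eq_sets)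
  also have "\<dots> \<le> 1 + c_bound n m"
  proof (rule add_mono)
    have "H False \<inter> H True = {(r, b). accepts_both m f1 f g r b}"
      unfolding H_def accepts_both_def by (auto simp: all_bool_eq)
    then show "measure_pmf.prob ?M (H False \<inter> H True) \<le> c_bound n m"
      using card_accepts_both_le_c_bound[OF \<open>CARD('a) = 2 ^ n\<close>]
      by (auto intro!: prob_pair_uniform_le \<open>finite (set_pmf R)\<close> finite_challenge_space
               challenge_space_nonempty simp: card_challenge_space m)
  qed simp
  finally show ?thesis .
qed

end
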